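(* Let $(E,\tau)$ be a violator space. Then $(E,\tau)$ is uniquely generated (in the sense that every $X\subseteq E$ has exactly one inclusion-minimal subset $B\subseteq X$ with $\tau(B)=\tau(X)$) if and only if $\tau(X)=\tau(ex(X))$ for every $X\subseteq E$.
   Context: $E$ is a finite set and $\tau:2^E\to 2^E$. $(E,\tau)$ is a violator space if (C1) $Y\subseteq\tau(Y)$ for all $Y\subseteq E$, and (C22) for all $F,G\subseteq E$, $F\subseteq G\subseteq\tau(F)$ implies $\tau(G)=\tau(F)$. An element $x\in X$ is an extreme point of $X$ if $x\notin\tau(X-\{x\})$; $ex(X)$ is the set of extreme points of $X$. *)

theory Defs
  imports Main
begin

(* A violator space (E, tau): E finite, tau : 2^E -> 2^E satisfying (C1) and (C22). *)
definition violator_space :: "'a set \<Rightarrow> ('a set \<Rightarrow> 'a set) \<Rightarrow> bool" where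
  "violator_space E tau \<longleftrightarrow> finite E
     \<and> (\<forall>Y. Y \<subseteq> E \<longrightarrow> tau Y \<subseteq> E)
     \<and> (\<forall>Y. Y \<subseteq> E \<longrightarrow> Y \<subseteq> tau Y)
     \<and> (\<forall>F G. F \<subseteq> E \<longrightarrow> G \<subseteq> E \<longrightarrow> F \<subseteq> G \<longrightarrow> G \<subseteq> tau F \<longrightarrow> tau G = tau F)"

definition ex :: "('a set \<Rightarrow> 'a set) \<Rightarrow> 'a set \<Rightarrow> 'a set" where
  "ex tau X = {x \<in> X. x \<notin> tau (X - {x})}"

definition is_basis :: "('a set \<Rightarrow> 'a set) \<Rightarrow> 'a set \<Rightarrow> 'a set \<Rightarrow> bool" where
  "is_basis tau X B \<longleftrightarrow> B \<subseteq> X \<and> tau B = tau X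
     \<and> (\<forall>B'. B' \<subset> B \<longrightarrow> tau B' \<noteq> tau B)"

definition uniquely_generated :: "'a set \<Rightarrow> ('a set \<Rightarrow> 'a set) \<Rightarrow> bool" where
  "uniquely_generated E tau \<longleftrightarrow> (\<forall>X. X \<subseteq> E \<longrightarrow> (\<exists>!B. is_basis tau X B))"

end

theory Submission
  imports Defs
begin

text \<open>
  Every generating subset B of X (that is, B \<subseteq> X with \<tau> B = \<tau> X) contains ex X: if an extreme
  point x were missing from B, then B \<subseteq> X - {x} \<subseteq> \<tau> B, so (C22) gives \<tau>(X - {x}) = \<tau> X \<ni> x.
  Conversely, removing a non-extreme point x does not change \<tau> X, again by (C22).
  Hence if \<tau>(ex X) = \<tau> X, then ex X is the least generating subset and thus the unique basis.
  If instead X has a unique basis B, every x \<in> B is extreme: otherwise a basis of X - {x} would be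
  a second basis of X avoiding x. So B = ex X.
\<close>

lemma violator_space_subset_tau:
  "violator_space E tau \<Longrightarrow> Y \<subseteq> E \<Longrightarrow> Y \<subseteq> tau Y"
  unfolding violator_space_def by blast

lemma violator_space_tau_eq:
  "violator_space E tau \<Longrightarrow> G \<subseteq> E \<Longrightarrow> F \<subseteq> G \<Longrightarrow> G \<subseteq> tau F \<Longrightarrow> tau G = tau F"
  unfolding violator_space_def by (meson order_trans)

lemma ex_subset: "ex tau X \<subseteq> X"
  unfolding ex_def by auto

lemma ex_subset_generating:
  assumes V: "violator_space E tau" and X: "X \<subseteq> E" and B: "B \<subseteq> X" "tau B = tau X"
  shows "ex tau X \<subseteq> B"
proof
  fix x assume x: "x \<in> ex tau X"
  show "x \<in> B"
  proof (rule ccontr)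
    assume "x \<notin> B"
    with B have "B \<subseteq> X - {x}" "X - {x} \<subseteq> tau B"
      using violator_space_subset_tau[OF V X] by auto
    with V X have "tau (X - {x}) = tau X"
      using B(2) violator_space_tau_eq[of E tau "X - {x}" B] by auto
    then show False
      using x violator_space_subset_tau[OF V X] unfolding ex_def by auto
  qed
qed

lemma tau_Diff_non_extreme:
  assumes V: "violator_space E tau" and X: "X \<subseteq> E" and x: "x \<in> X" "x \<notin> ex tau X"
  shows "tau (X - {x}) = tau X"
proof -
  have "X - {x} \<subseteq> tau (X - {x})"
    using violator_space_subset_tau[OF V] X by blast
  moreover have "x \<in> tau (X - {x})"
    using x unfolding ex_def by auto
  ultimately have "X \<subseteq> tau (X - {x})"
    by blast
  then show ?thesis
    using violator_space_tau_eq[OF V X, of "X - {x}"] by auto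
qed

lemma is_basis_of_generating_subset:
  "is_basis tau Y B \<Longrightarrow> Y \<subseteq> X \<Longrightarrow> tau Y = tau X \<Longrightarrow> is_basis tau X B"
  unfolding is_basis_def by (metis order_trans)

lemma is_basis_iff_eq_ex:
  assumes V: "violator_space E tau" and X: "X \<subseteq> E" and ex: "tau (ex tau X) = tau X"
  shows "is_basis tau X B \<longleftrightarrow> B = ex tau X"
proof
  assume B: "is_basis tau X B"
  then have "ex tau X \<subseteq> B"
    using ex_subset_generating[OF V X] unfolding is_basis_def by auto
  moreover have "\<not> ex tau X \<subset> B"
    using B ex unfolding is_basis_def by metis
  ultimately show "B = ex tau X"
    by auto
next
  assume B: "B = ex tau X"
  have "tau B' \<noteq> tau X" if "B' \<subset> ex tau X" for B'
    using that ex_subset_generating[OF V X, of B'] ex_subset[of tau X] by auto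
  then show "is_basis tau X B"
    unfolding is_basis_def B using ex ex_subset[of tau X] by auto
qed

lemma unique_basis_eq_ex:
  assumes V: "violator_space E tau" and U: "uniquely_generated E tau" and X: "X \<subseteq> E"
    and B: "is_basis tau X B"
  shows "B = ex tau X"
proof
  have unique: "C = B" if "is_basis tau X C" for C
    using U X B that unfolding uniquely_generated_def by blast
  show "B \<subseteq> ex tau X"
  proof
    fix x assume xB: "x \<in> B"
    show "x \<in> ex tau X"
    proof (rule ccontr)
      assume "x \<notin> ex tau X"
      moreover have "x \<in> X"
        using B xB unfolding is_basis_def by auto
      ultimately have eq: "tau (X - {x}) = tau X"
        using tau_Diff_non_extreme[OF V X] by blast
      obtain C where C: "is_basis tau (X - {x}) C"
        using U X unfolding uniquely_generated_def by (meson Diff_subset order_trans)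
      with eq have "C = B"
        using unique is_basis_of_generating_subset[of tau "X - {x}" C X] by blast
      with C xB show False
        unfolding is_basis_def by auto
    qed
  qed
  show "ex tau X \<subseteq> B"
    using B ex_subset_generating[OF V X] unfolding is_basis_def by auto
qed

theorem mainTheorem14:
  assumes "violator_space E tau"
  shows "uniquely_generated E tau \<longleftrightarrow> (\<forall>X. X \<subseteq> E \<longrightarrow> tau X = tau (ex tau X))"
proof
  assume U: "uniquely_generated E tau"
  show "\<forall>X. X \<subseteq> E \<longrightarrow> tau X = tau (ex tau X)"
  proof (intro allI impI)
    fix X assume X: "X \<subseteq> E"
    then obtain B where B: "is_basis tau X B"
      using U unfolding uniquely_generated_def by blast
    then have "B = ex tau X"
      using unique_basis_eq_ex[OF assms U X] by blast
    with B show "tau X = tau (ex tau X)"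
      unfolding is_basis_def by auto
  qed
next
  assume H: "\<forall>X. X \<subseteq> E \<longrightarrow> tau X = tau (ex tau X)"
  show "uniquely_generated E tau"
    unfolding uniquely_generated_def
  proof (intro allI impI)
    fix X assume X: "X \<subseteq> E"
    with H have "is_basis tau X B \<longleftrightarrow> B = ex tau X" for B
      using is_basis_iff_eq_ex[OF assms X] by simp
    then show "\<exists>!B. is_basis tau X B"
      by blast
  qed
qed

end
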